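(* Let $n\ge1$ and $c\in\mathbb{R}$. For each $L\subsetneqq\Omega_n=\{1,\dots,n\}$ let $\phi_L$ be an arbitrary real-valued function on $F^{n-|L|}$, and let $\phi_{\Omega_n}(\omega)=c$. Define $f$ on the product states of $\mathcal{H}_n=\otimes^n\mathbb{C}^2$ by \[ f(\sigma_J(z))=\sum_{L\subset J}(-1)^{|J-L|}\phi_L(\tau_L(z))\qquad (J\subset\Omega_n,\ z\in F_n). \] Then $\sum_{i=1}^{2^n} f(z_i)=c$ for every unentangled orthonormal basis $z_1,\dots,z_{2^n}$ of $\mathcal{H}_n$.
   Context: One-qubit states are points of $\mathbb{P}^1(\mathbb{C})$, identified with $\mathbb{C}\cup\{\infty\}$ via $(x,y)\mapsto x/y$. Let $\sigma(x,y)=(-\bar y,\bar x)$ on $\mathbb{C}^2$, inducing $\sigma z=-1/\bar z$; $\sigma v$ is the state orthogonal to $v$. $F=\{|z|<1\}\cup\{|z|=1,\operatorname{Im}z>0\}\cup\{1\}$ is a fundamental domain for $\sigma$. Product states of $\mathcal{H}_n$ are $z_1\otimes\cdots\otimes z_n$ with $z_i$ one-qubit states; $F_n$ is the set of those with all $z_i\in F$; $F^m$ is the direct product of $m$ copies of $F$, $F^0=\{\omega\}$. For $J\subset\Omega_n$, $\sigma_J$ applies $\sigma$ in the factors indexed by $J$ and the identity elsewhere; every product state equals $\sigma_J(z)$ for a unique $J$ and $z\in F_n$, so $f$ is well defined. For $z\in F_n$ and $J\ne\Omega_n$ with complement $\{i_1<\dots<i_k\}$, $\tau_J(z)=(z_{i_1},\dots,z_{i_k})$;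 $\tau_{\Omega_n}(z)=\omega$. An unentangled orthonormal basis is an orthonormal basis consisting of product unit vectors. *)

theory Defs
  imports Complex_Main
begin

text \<open>One-qubit states: points of P^1(C) = C \<union> {\<infinity>}, represented as
  complex option (None = \<infinity>, Some z = z).  A nonzero vector (x,y) of C^2 gives
  the point x/y.\<close>

definition proj1 :: "complex \<times> complex \<Rightarrow> complex option" where
  "proj1 v = (if snd v = 0 then None else Some (fst v / snd v))"

text \<open>The map induced by sigma(x,y) = (-conj y, conj x): z \<mapsto> -1/conj z.\<close>
definition sig :: "complex option \<Rightarrow> complex option" where
  "sig w = (case w of None \<Rightarrow> Some 0
                    | Some z \<Rightarrow> (if z = 0 then None else Some (- 1 / cnj z)))"

definition Fdom :: "complex option set" where
  "Fdom = {Some z | z. cmod z < 1} \<union> {Some z | z. cmod z = 1 \<and> Im z > 0} \<union> {Some 1}"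

text \<open>Product states of H_n are n-tuples of one-qubit states, given as lists of
  length n; position i-1 of the list is the factor with index i \<in> {1..n}.\<close>

definition Fn :: "nat \<Rightarrow> complex option list set" where
  "Fn n = {z. length z = n \<and> set z \<subseteq> Fdom}"

definition sigmaJ :: "nat set \<Rightarrow> complex option list \<Rightarrow> complex option list" where
  "sigmaJ J z = map (\<lambda>i. if i \<in> J then sig (z ! (i - 1)) else z ! (i - 1)) [1..<length z + 1]"

definition tauL :: "nat set \<Rightarrow> complex option list \<Rightarrow> complex option list" where
  "tauL L z = map (\<lambda>i. z ! (i - 1)) (filter (\<lambda>i. i \<notin> L) [1..<length z + 1])"

text \<open>H_n = tensor^n C^2, realised as functions on bit strings of length n.\<close>

definition Bits :: "nat \<Rightarrow> bool list set" where
  "Bits n = {bs. length bs = n}"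

definition inner_n :: "nat \<Rightarrow> (bool list \<Rightarrow> complex) \<Rightarrow> (bool list \<Rightarrow> complex) \<Rightarrow> complex" where
  "inner_n n u v = (\<Sum>bs\<in>Bits n. cnj (u bs) * v bs)"

definition tensor :: "(complex \<times> complex) list \<Rightarrow> bool list \<Rightarrow> complex" where
  "tensor vs bs = (\<Prod>i<length vs. if bs ! i then snd (vs ! i) else fst (vs ! i))"

definition unentangled_onb :: "nat \<Rightarrow> (nat \<Rightarrow> (complex \<times> complex) list) \<Rightarrow> bool" where
  "unentangled_onb n u \<longleftrightarrow>
     (\<forall>k<2^n. length (u k) = n) \<and>
     (\<forall>k<2^n. \<forall>l<2^n. inner_n n (tensor (u k)) (tensor (u l)) = (if k = l then 1 else 0)) \<and>
     (\<forall>\<psi> :: bool list \<Rightarrow> complex. \<exists>a :: nat \<Rightarrow> complex.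
        \<forall>bs\<in>Bits n. \<psi> bs = (\<Sum>k<2^n. a k * tensor (u k) bs))"

end

theory Submission
  imports Defs
begin

text \<open>Split every basis vector at its first qubit. Since sig exchanges F with its complement, any
  set of basis vectors whose first factors contain no orthogonal pair has pairwise orthogonal
  tails, hence at most 2^(n-1) members; so every such "half" of the basis has exactly 2^(n-1)
  members and its tails form an unentangled orthonormal basis of H_(n-1). On the other side, the
  expansion of f shows that f(a,r) + f(sig a,r) does not depend on a \<in> F and, as a function of r,
  has an expansion of the same kind with constant c, while each slice r \<mapsto> f(a,r) has one with
  some constant. By induction on n, the vectors with first factor outside F contribute c minus
  the sum of f(a,r) over their tails, and exchanging halves one class {a, sig a} at a time
  shows that this equals the sum of f(a,r) over the vectors with first factor in F.\<close>

definition qubit_inner :: "complex \<times> complex \<Rightarrow> complex \<times> complex \<Rightarrow> complex" where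
  "qubit_inner p q = cnj (fst p) * fst q + cnj (snd p) * snd q"

lemma sig_sig [simp]: "sig (sig x) = x"
  by (cases x) (auto simp: sig_def)

lemma cnj_eq_inverse_if_unit:
  assumes "cmod z = 1" shows "cnj z = 1 / z"
proof -
  have "z * cnj z = 1" using complex_norm_square[of z] assms by simp
  moreover have "z \<noteq> 0" using assms by auto
  ultimately show ?thesis by (simp add: field_simps)
qed

lemma Fdom_norm_le: "Some w \<in> Fdom \<Longrightarrow> cmod w \<le> 1"
  by (auto simp: Fdom_def)

lemma sig_unit_circle: "cmod z = 1 \<Longrightarrow> sig (Some z) = Some (- z)"
  by (auto simp: sig_def cnj_eq_inverse_if_unit)

lemma Fdom_unit_circle: "cmod w = 1 \<Longrightarrow> Some w \<in> Fdom \<longleftrightarrow> Im w > 0 \<or> w = 1"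
  by (auto simp: Fdom_def)

lemma sig_in_Fdom_iff: "sig a \<in> Fdom \<longleftrightarrow> a \<notin> Fdom"
proof (cases a)
  case None
  then show ?thesis by (auto simp: sig_def Fdom_def)
next
  case (Some z)
  show ?thesis
  proof (cases "z = 0")
    case True
    then show ?thesis using Some by (auto simp: sig_def Fdom_def)
  next
    case False
    have norm_sig: "cmod (- 1 / cnj z) = 1 / cmod z"
      by (simp add: norm_divide)
    consider "cmod z < 1" | "cmod z > 1" | "cmod z = 1" by linarith
    then show ?thesis
    proof cases
      case 1
      then have "1 < 1 / cmod z" using False by (simp add: field_simps)
      then have "sig a \<notin> Fdom" using Some False norm_sig Fdom_norm_le by (fastforce simp: sig_def)
      then show ?thesis using 1 Some by (auto simp: Fdom_def)
    next
      case 2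
      then have "1 / cmod z < 1" by (simp add: divide_less_eq)
      then show ?thesis using 2 Some False norm_sig by (auto simp: sig_def Fdom_def)
    next
      case 3
      have "Im z = 0 \<Longrightarrow> z = 1 \<or> z = -1"
        using 3 by (auto simp: cmod_def complex_eq_iff abs_if split: if_splits)
      then have "(Im (- z) > 0 \<or> - z = 1) \<longleftrightarrow> \<not> (Im z > 0 \<or> z = 1)"
        by (cases "Im z = 0") (auto simp: complex_eq_iff)
      then show ?thesis using 3 Some sig_unit_circle[OF 3] by (simp add: Fdom_unit_circle)
    qed
  qed
qed

lemma proj1_orthogonal:
  assumes "q \<noteq> (0, 0)" "q' \<noteq> (0, 0)" "qubit_inner q q' = 0"
  shows "proj1 q' = sig (proj1 q)"
proof -
  obtain x y x' y' where q: "q = (x, y)" and q': "q' = (x', y')" by (cases q, cases q')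
  have orth: "cnj x * x' + cnj y * y' = 0" using assms(3) q q' by (simp add: qubit_inner_def)
  consider "y = 0" | "x = 0" "y \<noteq> 0" | "x \<noteq> 0" "y \<noteq> 0" by blast
  then show ?thesis
  proof cases
    case 1
    then have "x' = 0" using orth assms(1) q by auto
    then show ?thesis using 1 assms(2) q q' by (simp add: proj1_def sig_def)
  next
    case 2
    then have "y' = 0" using orth by simp
    then show ?thesis using 2 q q' by (simp add: proj1_def sig_def)
  next
    case 3
    have x': "x' = - cnj y * y' / cnj x" using orth 3 by (simp add: field_simps add_eq_0_iff2)
    then have "y' \<noteq> 0" using assms(2) q' by auto
    then have "x' / y' = - 1 / cnj (x / y)" using x' by simp
    then show ?thesis using q q' 3 \<open>y' \<noteq> 0\<close> by (simp add: proj1_def sig_def)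
  qed
qed

definition Fdom_rep :: "complex option \<Rightarrow> complex option" where
  "Fdom_rep a = (if a \<in> Fdom then a else sig a)"

lemma Fdom_rep_in_Fdom: "Fdom_rep a \<in> Fdom"
  by (simp add: Fdom_rep_def sig_in_Fdom_iff)

lemma Fdom_rep_sig [simp]: "Fdom_rep (sig a) = Fdom_rep a"
  by (simp add: Fdom_rep_def sig_in_Fdom_iff)

lemma Bits_Suc: "Bits (Suc m) = Cons False ` Bits m \<union> Cons True ` Bits m"
proof
  show "Bits (Suc m) \<subseteq> Cons False ` Bits m \<union> Cons True ` Bits m"
  proof
    fix bs assume "bs \<in> Bits (Suc m)"
    then obtain b cs where "bs = b # cs" "length cs = m" by (auto simp: Bits_def length_Suc_conv)
    then show "bs \<in> Cons False ` Bits m \<union> Cons True ` Bits m" by (cases b) (auto simp: Bits_def)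
  qed
qed (auto simp: Bits_def)

lemma finite_Bits: "finite (Bits m)"
  using finite_lists_length_eq[of "UNIV :: bool set" m] by (simp add: Bits_def)

lemma sum_Bits_Suc: "(\<Sum>bs\<in>Bits (Suc m). g bs) = (\<Sum>bs\<in>Bits m. g (False # bs) + g (True # bs))"
  unfolding Bits_Suc
  by (subst sum.union_disjoint) (auto simp: finite_Bits sum.reindex sum.distrib)

lemma tensor_Cons: "tensor (q # vs) (b # bs) = (if b then snd q else fst q) * tensor vs bs"
proof -
  have "(\<Prod>i<length vs. if (b # bs) ! Suc i then snd ((q # vs) ! Suc i) else fst ((q # vs) ! Suc i))
      = tensor vs bs"
    unfolding tensor_def by (rule prod.cong) auto
  then show ?thesis unfolding tensor_def length_Cons prod.lessThan_Suc_shift by simp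
qed

lemma inner_n_tensor_Nil: "inner_n 0 (tensor []) (tensor []) = 1"
  by (simp add: inner_n_def Bits_def tensor_def)

lemma inner_n_tensor_Cons:
  "inner_n (Suc m) (tensor (q # vs)) (tensor (q' # ws)) = qubit_inner q q' * inner_n m (tensor vs) (tensor ws)"
  unfolding inner_n_def sum_Bits_Suc tensor_Cons qubit_inner_def
  by (simp add: sum_distrib_left algebra_simps sum.distrib)

definition orth_product_family :: "nat \<Rightarrow> 'k set \<Rightarrow> ('k \<Rightarrow> (complex \<times> complex) list) \<Rightarrow> bool" where
  "orth_product_family m K v \<longleftrightarrow> finite K \<and> (\<forall>k\<in>K. length (v k) = m \<and> (0, 0) \<notin> set (v k)) \<and>
     (\<forall>k\<in>K. \<forall>l\<in>K. k \<noteq> l \<longrightarrow> inner_n m (tensor (v k)) (tensor (v l)) = 0)"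

lemma orth_product_family_tl:
  assumes fam: "orth_product_family (Suc m) K v" and X: "X \<subseteq> K"
    and no_orth: "\<And>k l. k \<in> X \<Longrightarrow> l \<in> X \<Longrightarrow> proj1 (hd (v l)) \<noteq> sig (proj1 (hd (v k)))"
  shows "orth_product_family m X (\<lambda>k. tl (v k))"
proof -
  have split: "v k = hd (v k) # tl (v k)" "hd (v k) \<noteq> (0, 0)"
    "length (tl (v k)) = m" "(0, 0) \<notin> set (tl (v k))" if "k \<in> K" for k
  proof -
    have "length (v k) = Suc m" "(0, 0) \<notin> set (v k)"
      using fam that by (auto simp: orth_product_family_def)
    moreover obtain q t where "v k = q # t" using \<open>length (v k) = Suc m\<close> by (cases "v k") auto
    ultimately show "v k = hd (v k) # tl (v k)" "hd (v k) \<noteq> (0, 0)"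
      "length (tl (v k)) = m" "(0, 0) \<notin> set (tl (v k))"
      by auto
  qed
  have "inner_n m (tensor (tl (v k))) (tensor (tl (v l))) = 0" if kl: "k \<in> X" "l \<in> X" "k \<noteq> l" for k l
  proof -
    have "k \<in> K" "l \<in> K" using kl X by auto
    then have "inner_n (Suc m) (tensor (hd (v k) # tl (v k))) (tensor (hd (v l) # tl (v l))) = 0"
      using fam kl(3) split(1) unfolding orth_product_family_def by metis
    then have "qubit_inner (hd (v k)) (hd (v l)) * inner_n m (tensor (tl (v k))) (tensor (tl (v l))) = 0"
      by (simp only: inner_n_tensor_Cons)
    moreover have "qubit_inner (hd (v k)) (hd (v l)) \<noteq> 0"
      using proj1_orthogonal no_orth[OF kl(1,2)] split(2) \<open>k \<in> K\<close> \<open>l \<in> K\<close> by blast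
    ultimately show ?thesis by simp
  qed
  moreover have "finite X" using fam X finite_subset by (auto simp: orth_product_family_def)
  ultimately show ?thesis
    using X split(3,4) unfolding orth_product_family_def by blast
qed

text \<open>Since sig exchanges Fdom with its complement and fixes Fdom_rep, no two members of a
  first-factor half have orthogonal first factors.\<close>
definition first_factor_half ::
    "'k set \<Rightarrow> ('k \<Rightarrow> (complex \<times> complex) list) \<Rightarrow> (complex option \<Rightarrow> bool) \<Rightarrow> 'k set" where
  "first_factor_half K v P = {k \<in> K. proj1 (hd (v k)) \<in> Fdom \<longleftrightarrow> P (Fdom_rep (proj1 (hd (v k))))}"

lemma first_factor_half_compl: "K - first_factor_half K v P = first_factor_half K v (\<lambda>a. \<not> P a)"
  by (auto simp: first_factor_half_def)

lemma orth_product_family_first_factor_half: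
  assumes "orth_product_family (Suc m) K v"
  shows "orth_product_family m (first_factor_half K v P) (\<lambda>k. tl (v k))"
proof (rule orth_product_family_tl[OF assms])
  fix k l assume "k \<in> first_factor_half K v P" "l \<in> first_factor_half K v P"
  then show "proj1 (hd (v l)) \<noteq> sig (proj1 (hd (v k)))"
    by (auto simp: first_factor_half_def sig_in_Fdom_iff)
qed (auto simp: first_factor_half_def)

lemma card_first_factor_half_add:
  assumes "finite K"
  shows "card K = card (first_factor_half K v P) + card (first_factor_half K v (\<lambda>a. \<not> P a))"
proof -
  have "first_factor_half K v P \<subseteq> K" by (auto simp: first_factor_half_def)
  with assms show ?thesis
    by (simp add: card_Diff_subset card_mono finite_subset flip: first_factor_half_compl)
qed

lemma orth_product_family_card_le: "orth_product_family m K v \<Longrightarrow> card K \<le> 2 ^ m"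
proof (induction m arbitrary: K v)
  case 0
  then have "v k = []" if "k \<in> K" for k
    using that by (simp add: orth_product_family_def)
  then have "\<forall>k\<in>K. \<forall>l\<in>K. k = l"
    using 0 inner_n_tensor_Nil by (force simp: orth_product_family_def)
  then show ?case using 0 card_le_Suc0_iff_eq[of K] by (simp add: orth_product_family_def)
next
  case (Suc m)
  have "card (first_factor_half K v (\<lambda>_. True)) \<le> 2 ^ m" "card (first_factor_half K v (\<lambda>_. False)) \<le> 2 ^ m"
    using Suc orth_product_family_first_factor_half by blast+
  moreover have "card K = card (first_factor_half K v (\<lambda>_. True)) + card (first_factor_half K v (\<lambda>_. False))"
    using card_first_factor_half_add[of K v "\<lambda>_. True"] Suc.prems by (simp add: orth_product_family_def)
  ultimately show ?case
    unfolding power_Suc by linarith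
qed

lemma card_first_factor_half:
  assumes fam: "orth_product_family (Suc m) K v" and card: "card K = 2 ^ Suc m"
  shows "card (first_factor_half K v P) = 2 ^ m"
proof -
  have "card (first_factor_half K v P) \<le> 2 ^ m" "card (first_factor_half K v (\<lambda>a. \<not> P a)) \<le> 2 ^ m"
    using fam orth_product_family_first_factor_half orth_product_family_card_le by blast+
  moreover have "card K = card (first_factor_half K v P) + card (first_factor_half K v (\<lambda>a. \<not> P a))"
    by (rule card_first_factor_half_add) (use fam in \<open>simp add: orth_product_family_def\<close>)
  ultimately show ?thesis
    using card unfolding power_Suc by linarith
qed

lemma upt_1_Suc: "[1..<Suc n + 1] = 1 # map Suc [1..<n + 1]"
  by (simp add: map_Suc_upt upt_conv_Cons)

lemma sigmaJ_Cons_image_Suc: "0 \<notin> J \<Longrightarrow> sigmaJ (Suc ` J) (a # z) = a # sigmaJ J z"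
  unfolding sigmaJ_def length_Cons upt_1_Suc
  by (auto simp: image_iff nth_Cons' intro!: map_cong)

lemma sigmaJ_Cons_insert_1: "0 \<notin> J \<Longrightarrow> sigmaJ (insert 1 (Suc ` J)) (a # z) = sig a # sigmaJ J z"
  unfolding sigmaJ_def length_Cons upt_1_Suc
  by (auto simp: image_iff nth_Cons' intro!: map_cong)

lemma tauL_Cons_image_Suc: "0 \<notin> L \<Longrightarrow> tauL (Suc ` L) (a # z) = a # tauL L z"
  unfolding tauL_def length_Cons upt_1_Suc
  by (auto simp: image_iff nth_Cons' filter_map comp_def intro!: map_cong filter_cong)

lemma tauL_Cons_insert_1: "0 \<notin> L \<Longrightarrow> tauL (insert 1 (Suc ` L)) (a # z) = tauL L z"
  unfolding tauL_def length_Cons upt_1_Suc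
  by (auto simp: image_iff nth_Cons' filter_map comp_def intro!: map_cong filter_cong)

lemma Fn_0: "Fn 0 = {[]}"
  by (auto simp: Fn_def)

lemma Cons_in_Fn_Suc_iff: "a # z \<in> Fn (Suc n) \<longleftrightarrow> a \<in> Fdom \<and> z \<in> Fn n"
  by (auto simp: Fn_def)

lemma sum_Pow_image_Suc: "(\<Sum>L\<in>Pow (Suc ` J). F L) = (\<Sum>L\<in>Pow J. F (Suc ` L))"
proof -
  have "Pow (Suc ` J) = image Suc ` Pow J" by (auto simp: subset_image_iff)
  moreover have "inj_on (image Suc) (Pow J)" by (auto simp: inj_on_def inj_image_eq_iff)
  ultimately show ?thesis by (simp add: sum.reindex)
qed

lemma sum_Pow_insert_1_image_Suc:
  assumes "finite J" "0 \<notin> J"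
  shows "(\<Sum>L\<in>Pow (insert 1 (Suc ` J)). F L)
       = (\<Sum>L\<in>Pow J. F (Suc ` L)) + (\<Sum>L\<in>Pow J. F (insert 1 (Suc ` L)))"
proof -
  have notin: "1 \<notin> Suc ` J" using assms by auto
  have inj: "inj_on (insert 1) (Pow (Suc ` J))"
    unfolding inj_on_def using notin by (metis Diff_insert_absorb PowD in_mono)
  have "(\<Sum>L\<in>Pow (insert 1 (Suc ` J)). F L)
      = (\<Sum>L\<in>Pow (Suc ` J). F L) + (\<Sum>L\<in>insert 1 ` Pow (Suc ` J). F L)"
    unfolding Pow_insert using assms notin by (intro sum.union_disjoint) auto
  also have "(\<Sum>L\<in>insert 1 ` Pow (Suc ` J). F L) = (\<Sum>L\<in>Pow (Suc ` J). F (insert 1 L))"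
    by (rule sum.reindex[OF inj, unfolded comp_def])
  finally show ?thesis by (simp add: sum_Pow_image_Suc)
qed

lemma card_image_Suc_diff: "card (Suc ` J - Suc ` L) = card (J - L)"
  by (simp add: image_set_diff[symmetric] card_image)

lemma card_insert_1_image_Suc_diff:
  "finite J \<Longrightarrow> 0 \<notin> J \<Longrightarrow> 0 \<notin> L \<Longrightarrow> card (insert 1 (Suc ` J) - Suc ` L) = Suc (card (J - L))"
proof -
  assume "finite J" "0 \<notin> J" "0 \<notin> L"
  then have "insert 1 (Suc ` J) - Suc ` L = insert 1 (Suc ` J - Suc ` L)"
    and "1 \<notin> Suc ` J - Suc ` L" by auto
  then show ?thesis using \<open>finite J\<close> card_image_Suc_diff by simp
qed

lemma card_insert_1_image_Suc_diff_insert_1: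
  "0 \<notin> J \<Longrightarrow> card (insert 1 (Suc ` J) - insert 1 (Suc ` L)) = card (J - L)"
proof -
  assume "0 \<notin> J"
  then have "insert 1 (Suc ` J) - insert 1 (Suc ` L) = Suc ` J - Suc ` L" by auto
  then show ?thesis using card_image_Suc_diff by simp
qed

text \<open>The hypothesis of the theorem on f, abstracted over n, \<phi> and c so that it can be passed
  on to the slices and pair sums of f.\<close>
definition frame_expansion ::
    "nat \<Rightarrow> (nat set \<Rightarrow> complex option list \<Rightarrow> real) \<Rightarrow> (complex option list \<Rightarrow> real) \<Rightarrow> real \<Rightarrow> bool" where
  "frame_expansion n \<phi> f c \<longleftrightarrow> \<phi> {1..n} [] = c \<and> (\<forall>J. J \<subseteq> {1..n} \<longrightarrow> (\<forall>z\<in>Fn n.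
     f (sigmaJ J z) = (\<Sum>L\<in>Pow J. (-1) ^ card (J - L) * \<phi> L (tauL L z))))"

lemma frame_expansion_Cons:
  assumes fe: "frame_expansion (Suc n) \<phi> f c" and a: "a \<in> Fdom" and J: "J \<subseteq> {1..n}" and z: "z \<in> Fn n"
  shows "f (a # sigmaJ J z) = (\<Sum>L\<in>Pow J. (-1) ^ card (J - L) * \<phi> (Suc ` L) (a # tauL L z))"
proof -
  have J0: "0 \<notin> J" and L0: "\<And>L. L \<subseteq> J \<Longrightarrow> 0 \<notin> L" using J by auto
  have "f (a # sigmaJ J z) = f (sigmaJ (Suc ` J) (a # z))"
    using sigmaJ_Cons_image_Suc[OF J0] by simp
  also have "\<dots> = (\<Sum>L\<in>Pow (Suc ` J). (-1) ^ card (Suc ` J - L) * \<phi> L (tauL L (a # z)))"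
  proof -
    have "Suc ` J \<subseteq> {1..Suc n}" "a # z \<in> Fn (Suc n)" using J a z by (auto simp: Cons_in_Fn_Suc_iff)
    then show ?thesis using fe unfolding frame_expansion_def by blast
  qed
  also have "\<dots> = (\<Sum>L\<in>Pow J. (-1) ^ card (J - L) * \<phi> (Suc ` L) (a # tauL L z))"
    unfolding sum_Pow_image_Suc card_image_Suc_diff
    by (intro sum.cong refl) (auto simp: L0 tauL_Cons_image_Suc)
  finally show ?thesis .
qed

lemma frame_expansion_Cons_sig:
  assumes fe: "frame_expansion (Suc n) \<phi> f c" and a: "a \<in> Fdom" and J: "J \<subseteq> {1..n}" and z: "z \<in> Fn n"
  shows "f (sig a # sigmaJ J z) = (\<Sum>L\<in>Pow J. (-1) ^ card (J - L) *
            (\<phi> (insert 1 (Suc ` L)) (tauL L z) - \<phi> (Suc ` L) (a # tauL L z)))"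
proof -
  have J0: "0 \<notin> J" and L0: "\<And>L. L \<subseteq> J \<Longrightarrow> 0 \<notin> L" using J by auto
  have fin: "finite J" using J finite_subset by blast
  have "f (sig a # sigmaJ J z) = f (sigmaJ (insert 1 (Suc ` J)) (a # z))"
    using sigmaJ_Cons_insert_1[OF J0] by simp
  also have "\<dots> = (\<Sum>L\<in>Pow (insert 1 (Suc ` J)). (-1) ^ card (insert 1 (Suc ` J) - L) * \<phi> L (tauL L (a # z)))"
  proof -
    have "insert 1 (Suc ` J) \<subseteq> {1..Suc n}" "a # z \<in> Fn (Suc n)" using J a z by (auto simp: Cons_in_Fn_Suc_iff)
    then show ?thesis using fe unfolding frame_expansion_def by blast
  qed
  also have "\<dots> = (\<Sum>L\<in>Pow J. - ((-1) ^ card (J - L) * \<phi> (Suc ` L) (a # tauL L z)))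
      + (\<Sum>L\<in>Pow J. (-1) ^ card (J - L) * \<phi> (insert 1 (Suc ` L)) (tauL L z))"
    unfolding sum_Pow_insert_1_image_Suc[OF fin J0] card_insert_1_image_Suc_diff_insert_1[OF J0]
    by (intro arg_cong2[where f = "(+)"] sum.cong refl)
       (auto simp: J0 L0 fin tauL_Cons_image_Suc
         card_insert_1_image_Suc_diff[unfolded One_nat_def] tauL_Cons_insert_1[unfolded One_nat_def])
  finally show ?thesis by (simp add: sum_subtractf sum_negf right_diff_distrib)
qed

lemma frame_expansion_pair_sum:
  assumes "frame_expansion (Suc n) \<phi> f c" "a \<in> Fdom" "J \<subseteq> {1..n}" "z \<in> Fn n"
  shows "f (a # sigmaJ J z) + f (sig a # sigmaJ J z)
       = (\<Sum>L\<in>Pow J. (-1) ^ card (J - L) * \<phi> (insert 1 (Suc ` L)) (tauL L z))"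
  using frame_expansion_Cons[OF assms] frame_expansion_Cons_sig[OF assms]
  by (simp add: sum.distrib[symmetric] algebra_simps)

lemma product_state_decomp: "length r = n \<Longrightarrow> \<exists>J z. J \<subseteq> {1..n} \<and> z \<in> Fn n \<and> r = sigmaJ J z"
proof (induction n arbitrary: r)
  case 0
  then show ?case by (intro exI[of _ "{}"] exI[of _ "[]"]) (auto simp: Fn_0 sigmaJ_def)
next
  case (Suc n)
  then obtain a r' where r: "r = a # r'" "length r' = n" by (metis length_Suc_conv)
  then obtain J z where Jz: "J \<subseteq> {1..n}" "z \<in> Fn n" "r' = sigmaJ J z" using Suc.IH by blast
  have J0: "0 \<notin> J" using Jz by auto
  show ?case
  proof (cases "a \<in> Fdom")
    case True
    then show ?thesis using Jz r sigmaJ_Cons_image_Suc[OF J0, of a z]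
      by (intro exI[of _ "Suc ` J"] exI[of _ "a # z"]) (auto simp: Cons_in_Fn_Suc_iff)
  next
    case False
    then show ?thesis using Jz r sigmaJ_Cons_insert_1[OF J0, of "sig a" z]
      by (intro exI[of _ "insert 1 (Suc ` J)"] exI[of _ "sig a # z"])
         (auto simp: Cons_in_Fn_Suc_iff sig_in_Fdom_iff)
  qed
qed

lemma frame_expansion_slice:
  assumes "frame_expansion (Suc n) \<phi> f c" "a \<in> Fdom"
  shows "frame_expansion n (\<lambda>L t. \<phi> (Suc ` L) (a # t)) (\<lambda>r. f (a # r)) (\<phi> (Suc ` {1..n}) [a])"
  using frame_expansion_Cons[OF assms] by (auto simp: frame_expansion_def tauL_def)

lemma frame_expansion_pair:
  assumes fe: "frame_expansion (Suc n) \<phi> f c" and a: "a \<in> Fdom"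
  shows "frame_expansion n (\<lambda>L. \<phi> (insert 1 (Suc ` L))) (\<lambda>r. f (a # r) + f (sig a # r)) c"
proof -
  have "insert 1 (Suc ` {1..n}) = {1..Suc n}" by auto
  then show ?thesis
    using fe frame_expansion_pair_sum[OF fe a] by (auto simp: frame_expansion_def)
qed

lemma frame_expansion_pair_sum_indep:
  assumes fe: "frame_expansion (Suc n) \<phi> f c" and a: "a \<in> Fdom" and b: "b \<in> Fdom" and "length r = n"
  shows "f (a # r) + f (sig a # r) = f (b # r) + f (sig b # r)"
proof -
  obtain J z where "J \<subseteq> {1..n}" "z \<in> Fn n" "r = sigmaJ J z"
    using product_state_decomp[OF \<open>length r = n\<close>] by blast
  then show ?thesis using frame_expansion_pair_sum[OF fe a] frame_expansion_pair_sum[OF fe b] by simp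
qed

lemma sum_filter_split:
  "finite K \<Longrightarrow> sum f K = sum f {k \<in> K. P k} + sum f {k \<in> K. \<not> P k}"
  by (subst sum.union_disjoint[symmetric]) (auto intro: sum.cong)

lemma sum_class_exchange:
  fixes G :: "'a \<Rightarrow> 'k \<Rightarrow> 'b :: cancel_comm_monoid_add"
  assumes fin: "finite K"
    and classwise: "\<And>a. a \<in> r ` K \<Longrightarrow>
      (\<Sum>k\<in>{k \<in> K. P k \<longleftrightarrow> r k = a}. G a k) = (\<Sum>k\<in>{k \<in> K. \<not> P k}. G a k)"
  shows "(\<Sum>k\<in>{k \<in> K. P k}. G (r k) k) = (\<Sum>k\<in>{k \<in> K. \<not> P k}. G (r k) k)"
proof -
  have class_eq: "(\<Sum>k\<in>{k \<in> K. P k \<and> r k = a}. G a k) = (\<Sum>k\<in>{k \<in> K. \<not> P k \<and> r k = a}. G a k)"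
    if a: "a \<in> r ` K" for a
  proof -
    have "{k \<in> K. P k \<longleftrightarrow> r k = a} = {k \<in> K. P k \<and> r k = a} \<union> {k \<in> K. \<not> P k \<and> r k \<noteq> a}"
      and "{k \<in> K. \<not> P k} = {k \<in> K. \<not> P k \<and> r k = a} \<union> {k \<in> K. \<not> P k \<and> r k \<noteq> a}"
      by auto
    then have "(\<Sum>k\<in>{k \<in> K. P k \<longleftrightarrow> r k = a}. G a k)
        = (\<Sum>k\<in>{k \<in> K. P k \<and> r k = a}. G a k) + (\<Sum>k\<in>{k \<in> K. \<not> P k \<and> r k \<noteq> a}. G a k)"
      and "(\<Sum>k\<in>{k \<in> K. \<not> P k}. G a k)
        = (\<Sum>k\<in>{k \<in> K. \<not> P k \<and> r k = a}. G a k) + (\<Sum>k\<in>{k \<in> K. \<not> P k \<and> r k \<noteq> a}. G a k)"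
      using fin by (simp_all add: sum.union_disjoint disjoint_iff)
    with classwise[OF a] show ?thesis by simp
  qed
  have grouped: "(\<Sum>k\<in>{k \<in> K. Q k}. G (r k) k) = (\<Sum>a\<in>r ` K. \<Sum>k\<in>{k \<in> K. Q k \<and> r k = a}. G a k)"
    for Q
  proof -
    have "(\<Sum>a\<in>r ` K. \<Sum>k\<in>{k \<in> K. Q k \<and> r k = a}. G a k)
        = (\<Sum>a\<in>r ` K. \<Sum>k\<in>{k \<in> {k \<in> K. Q k}. r k = a}. G (r k) k)"
      by (intro sum.cong) auto
    also have "\<dots> = (\<Sum>k\<in>{k \<in> K. Q k}. G (r k) k)"
      by (rule sum.group) (use fin in auto)
    finally show ?thesis by simp
  qed
  show ?thesis unfolding grouped by (rule sum.cong) (auto simp: class_eq)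
qed

lemma frame_expansion_sum_orth_product_family:
  "frame_expansion m \<phi> g c \<Longrightarrow> orth_product_family m K v \<Longrightarrow> card K = 2 ^ m \<Longrightarrow>
   (\<Sum>k\<in>K. g (map proj1 (v k))) = c"
proof (induction m arbitrary: \<phi> g c K v)
  case 0
  then obtain k where "K = {k}" "v k = []"
    by (metis card_1_singletonE orth_product_family_def length_0_conv power_0 singletonI)
  then show ?case
    using 0 by (simp add: frame_expansion_def Fn_0 sigmaJ_def tauL_def)
next
  case (Suc m)
  define x where "x k = proj1 (hd (v k))" for k
  define s where "s k = map proj1 (tl (v k))" for k
  have fin: "finite K" using Suc.prems(2) by (simp add: orth_product_family_def)
  have v: "map proj1 (v k) = x k # s k" "length (s k) = m" if "k \<in> K" for k
    using Suc.prems(2) that unfolding orth_product_family_def x_def s_def by (cases "v k"; auto)+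
  have half_sum: "(\<Sum>k\<in>{k \<in> K. x k \<in> Fdom \<longleftrightarrow> P (Fdom_rep (x k))}. g' (s k)) = c'"
    if "frame_expansion m \<psi> g' c'" for P \<psi> g' c'
    using Suc.IH[OF that] Suc.prems(2,3) orth_product_family_first_factor_half card_first_factor_half
    unfolding first_factor_half_def x_def s_def by blast
  have exchange: "(\<Sum>k\<in>{k \<in> K. x k \<in> Fdom}. g (Fdom_rep (x k) # s k))
      = (\<Sum>k\<in>{k \<in> K. x k \<notin> Fdom}. g (Fdom_rep (x k) # s k))"
  \<comment> \<open>Both halves below carry orthonormal bases of tails, so both slice sums equal the same constant.\<close>
  proof (rule sum_class_exchange[OF fin, where r = "\<lambda>k. Fdom_rep (x k)" and G = "\<lambda>a k. g (a # s k)"])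
    fix a assume "a \<in> (\<lambda>k. Fdom_rep (x k)) ` K"
    then have slice: "frame_expansion m (\<lambda>L t. \<phi> (Suc ` L) (a # t)) (\<lambda>r. g (a # r)) (\<phi> (Suc ` {1..m}) [a])"
      using frame_expansion_slice[OF Suc.prems(1)] Fdom_rep_in_Fdom by blast
    show "(\<Sum>k\<in>{k \<in> K. x k \<in> Fdom \<longleftrightarrow> Fdom_rep (x k) = a}. g (a # s k))
        = (\<Sum>k\<in>{k \<in> K. x k \<notin> Fdom}. g (a # s k))"
      using half_sum[OF slice, of "\<lambda>b. b = a"] half_sum[OF slice, of "\<lambda>_. False"] by simp
  qed
  define a0 :: "complex option" where "a0 = Some 0"
  have a0: "a0 \<in> Fdom" by (simp add: a0_def Fdom_def)
  define h where "h r = g (a0 # r) + g (sig a0 # r)" for r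
  have "(\<Sum>k\<in>{k \<in> K. x k \<notin> Fdom}. h (s k)) = c"
    using half_sum[OF frame_expansion_pair[OF Suc.prems(1) a0], of "\<lambda>_. False"] by (simp add: h_def)
  moreover have "g (x k # s k) = h (s k) - g (Fdom_rep (x k) # s k)" if "k \<in> K" "x k \<notin> Fdom" for k
    using frame_expansion_pair_sum_indep[OF Suc.prems(1) Fdom_rep_in_Fdom[of "x k"] a0 v(2)[OF that(1)]] that
    by (simp add: h_def Fdom_rep_def)
  moreover have "g (x k # s k) = g (Fdom_rep (x k) # s k)" if "x k \<in> Fdom" for k
    using that by (simp add: Fdom_rep_def)
  ultimately show ?case
    using sum_filter_split[OF fin, of "\<lambda>k. g (x k # s k)" "\<lambda>k. x k \<in> Fdom"] exchange
    by (simp add: v sum_subtractf)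
qed

lemma tensor_zero: "(0, 0) \<in> set vs \<Longrightarrow> tensor vs bs = 0"
  unfolding tensor_def by (rule prod_zero) (auto simp: in_set_conv_nth intro!: bexI)

lemma unentangled_onb_orth_product_family:
  assumes "unentangled_onb n u"
  shows "orth_product_family n {..<2 ^ n} u"
proof -
  have len: "\<forall>k<2 ^ n. length (u k) = n"
    and orthonormal: "\<forall>k<2 ^ n. \<forall>l<2 ^ n. inner_n n (tensor (u k)) (tensor (u l)) = (if k = l then 1 else 0)"
    using assms unfolding unentangled_onb_def by blast+
  have "(0, 0) \<notin> set (u k)" if k: "k < 2 ^ n" for k
  proof
    assume "(0, 0) \<in> set (u k)"
    then have "inner_n n (tensor (u k)) (tensor (u k)) = 0" by (simp add: inner_n_def tensor_zero)
    then show False using orthonormal k by auto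
  qed
  then show ?thesis using len orthonormal by (auto simp: orth_product_family_def)
qed

theorem theorem3:
  fixes n :: nat and c :: real
    and \<phi> :: "nat set \<Rightarrow> complex option list \<Rightarrow> real"
    and f :: "complex option list \<Rightarrow> real"
    and u :: "nat \<Rightarrow> (complex \<times> complex) list"
  assumes "n \<ge> 1"
    and "\<phi> {1..n} [] = c"
    and "\<forall>J. J \<subseteq> {1..n} \<longrightarrow> (\<forall>z\<in>Fn n.
           f (sigmaJ J z) = (\<Sum>L\<in>Pow J. (-1) ^ card (J - L) * \<phi> L (tauL L z)))"
    and "unentangled_onb n u"
  shows "(\<Sum>k<2^n. f (map proj1 (u k))) = c"
proof (rule frame_expansion_sum_orth_product_family)
  show "frame_expansion n \<phi> f c" using assms(2,3) by (simp add: frame_expansion_def)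
  show "orth_product_family n {..<2 ^ n} u" using assms(4) by (rule unentangled_onb_orth_product_family)
qed simp

end
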